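(* Let $\alpha_1,\dots,\alpha_k$ be nonnegative reals with $\sum_{i=1}^k\alpha_i=1$ and let $\frac13\le\theta\le1$. For $I\subset\{1,\dots,k\}$ write $\alpha_I=\sum_{i\in I}\alpha_i$. Consider the statements: ($I$) $\alpha_i\ge1-\theta$ for some $i$; ($I_2^{\mathrm{maj}}$) $\alpha_{\{i,j\}}\ge1-\theta$ for some $1\le i<j\le k$; ($I_2$) $\alpha_{\{i,j\}}\ge\frac32(1-\theta)$ for some $1\le i<j\le k$; ($II^{\mathrm{maj}}$) there is a partition $\{1,\dots,k\}=I\uplus J\uplus J'$ with $2\theta-1\le\alpha_I\le4\theta-2$ and $|\alpha_J-\alpha_{J'}|\le2\theta-1$; ($II^{\mathrm{min}}$) there is a partition $\{1,\dots,k\}=J\uplus J'$ with $|\alpha_J-\alpha_{J'}|\le2\theta-1$. Then: (i) if $\theta=5/8$, at least one of ($I$), ($II^{\mathrm{maj}}$) holds; (ii) if $\theta\ge3/5$, at least one of ($I$), ($I_2$), ($II^{\mathrm{min}}$) holds; (iii) if $\theta=7/12$, at least one of ($I$), ($I_2^{\mathrm{maj}}$), ($II^{\mathrm{maj}}$) holds; (iv) if $k=5$ and $\theta=11/20$, at least one of ($I_2^{\mathrm{maj}}$), ($II^{\mathrm{maj}}$) holds; (v) if $k\in\{3,4\}$ and $\theta\ge1/2$, then ($I_2^{\mathrm{maj}}$) holds; (vi) if $k=3$ and $\theta\ge5/9$, or $k=2$ and $\theta\ge1/3$, then ($I_2$) holds. *)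

theory Defs
  imports Complex_Main
begin

definition condI :: "nat \<Rightarrow> (nat \<Rightarrow> real) \<Rightarrow> real \<Rightarrow> bool" where
  "condI k \<alpha> \<theta> \<longleftrightarrow> (\<exists>i\<in>{1..k}. \<alpha> i \<ge> 1 - \<theta>)"

definition condI2maj :: "nat \<Rightarrow> (nat \<Rightarrow> real) \<Rightarrow> real \<Rightarrow> bool" where
  "condI2maj k \<alpha> \<theta> \<longleftrightarrow>
     (\<exists>i j. 1 \<le> i \<and> i < j \<and> j \<le> k \<and> sum \<alpha> {i, j} \<ge> 1 - \<theta>)"

definition condI2 :: "nat \<Rightarrow> (nat \<Rightarrow> real) \<Rightarrow> real \<Rightarrow> bool" where
  "condI2 k \<alpha> \<theta> \<longleftrightarrow>
     (\<exists>i j. 1 \<le> i \<and> i < j \<and> j \<le> k \<and> sum \<alpha> {i, j} \<ge> 3/2 * (1 - \<theta>))"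

definition condIImaj :: "nat \<Rightarrow> (nat \<Rightarrow> real) \<Rightarrow> real \<Rightarrow> bool" where
  "condIImaj k \<alpha> \<theta> \<longleftrightarrow>
     (\<exists>I J J'. I \<union> J \<union> J' = {1..k} \<and> I \<inter> J = {} \<and> I \<inter> J' = {} \<and> J \<inter> J' = {} \<and>
        2*\<theta> - 1 \<le> sum \<alpha> I \<and> sum \<alpha> I \<le> 4*\<theta> - 2 \<and>
        \<bar>sum \<alpha> J - sum \<alpha> J'\<bar> \<le> 2*\<theta> - 1)"

definition condIImin :: "nat \<Rightarrow> (nat \<Rightarrow> real) \<Rightarrow> real \<Rightarrow> bool" where
  "condIImin k \<alpha> \<theta> \<longleftrightarrow>
     (\<exists>J J'. J \<union> J' = {1..k} \<and> J \<inter> J' = {} \<and>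
        \<bar>sum \<alpha> J - sum \<alpha> J'\<bar> \<le> 2*\<theta> - 1)"

end

theory Submission
  imports Defs
begin

(* Greedy balancing: items of weight at most m, each put on the currently lighter side, leave
   an imbalance of at most m unless the initial imbalance exceeds their total weight.  Hence the
   weights on S split into two parts differing by at most m as soon as the items heavier than m
   (at most 2n of them when alpha_S <= (2n+1) m) fall into two groups of at most n items, each
   of weight at most (alpha_S + m)/2.  Negating (I) and (I_2), resp. (I_2^maj), bounds single
   weights and pairs, which is what this grouping needs.  For theta = 5/8 and theta = 7/12 one
   first sets aside a block I with 2 theta - 1 <= alpha_I <= 4 theta - 2 (one medium weight, or
   a subset sum of small weights) and balances the rest; for theta >= 3/5 everything is
   balanced.  The statements for k <= 5 are averaging arguments over pairs. *)

lemma split_shifted_difference_le: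
  fixes \<alpha> :: "'a \<Rightarrow> real"
  assumes "finite F" and "\<And>i. i \<in> F \<Longrightarrow> 0 \<le> \<alpha> i \<and> \<alpha> i \<le> m"
  shows "\<exists>A B. A \<union> B = F \<and> A \<inter> B = {} \<and>
           \<bar>D + sum \<alpha> A - sum \<alpha> B\<bar> \<le> max m (\<bar>D\<bar> - sum \<alpha> F)"
  using assms
proof (induction F arbitrary: D rule: finite_induct)
  case empty
  show ?case
    by (intro exI[of _ "{}"]) simp
next
  case (insert x F)
  have x: "0 \<le> \<alpha> x" "\<alpha> x \<le> m" and F: "\<And>i. i \<in> F \<Longrightarrow> 0 \<le> \<alpha> i \<and> \<alpha> i \<le> m"
    using insert.prems by auto
  have "0 \<le> sum \<alpha> F"
    using F by (simp add: sum_nonneg)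
  have sum_insert: "sum \<alpha> (insert x F) = \<alpha> x + sum \<alpha> F"
    using insert.hyps by simp
  \<comment> \<open>Against a surplus \<open>E \<ge> 0\<close>, the new item \<open>x\<close> joins the lighter side \<open>B\<close>.\<close>
  have nonneg_shift: "\<exists>A B. A \<union> B = insert x F \<and> A \<inter> B = {} \<and>
      \<bar>E + sum \<alpha> A - sum \<alpha> B\<bar> \<le> max m (\<bar>E\<bar> - sum \<alpha> (insert x F))" if "0 \<le> E" for E
  proof -
    obtain A B where AB: "A \<union> B = F" "A \<inter> B = {}"
      and bound: "\<bar>E - \<alpha> x + sum \<alpha> A - sum \<alpha> B\<bar> \<le> max m (\<bar>E - \<alpha> x\<bar> - sum \<alpha> F)"
      using insert.IH[OF F, of "E - \<alpha> x"] by blast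
    have "finite B" "x \<notin> B"
      using AB insert.hyps by auto
    then have "E + sum \<alpha> A - sum \<alpha> (insert x B) = E - \<alpha> x + sum \<alpha> A - sum \<alpha> B"
      by simp
    moreover have "\<bar>E - \<alpha> x\<bar> - sum \<alpha> F \<le> max m (\<bar>E\<bar> - sum \<alpha> (insert x F))"
    proof (cases "\<alpha> x \<le> E")
      case True
      then show ?thesis
        using that unfolding sum_insert by simp
    next
      case False
      then have "\<bar>E - \<alpha> x\<bar> - sum \<alpha> F \<le> m"
        using that x \<open>0 \<le> sum \<alpha> F\<close> by linarith
      then show ?thesis
        by simp
    qed
    ultimately have "\<bar>E + sum \<alpha> A - sum \<alpha> (insert x B)\<bar> \<le> max m (\<bar>E\<bar> - sum \<alpha> (insert x F))"
      using bound by linarith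
    moreover have "A \<union> insert x B = insert x F" "A \<inter> insert x B = {}"
      using AB insert.hyps by auto
    ultimately show ?thesis by blast
  qed
  show ?case
  proof (cases "0 \<le> D")
    case True
    then show ?thesis by (rule nonneg_shift)
  next
    case False
    then have "0 \<le> - D"
      by simp
    from nonneg_shift[OF this] obtain A B where AB: "A \<union> B = insert x F" "A \<inter> B = {}"
      and bound: "\<bar>- D + sum \<alpha> A - sum \<alpha> B\<bar> \<le> max m (\<bar>- D\<bar> - sum \<alpha> (insert x F))"
      by blast
    have "\<bar>D + sum \<alpha> B - sum \<alpha> A\<bar> \<le> max m (\<bar>D\<bar> - sum \<alpha> (insert x F))"
      using bound by (simp add: abs_minus_commute)
    moreover have "B \<union> A = insert x F" "B \<inter> A = {}"
      using AB by auto
    ultimately show ?thesis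
      by blast
  qed
qed

lemma exists_subset_sum_between:
  fixes \<alpha> :: "'a \<Rightarrow> real"
  assumes "finite F" and "\<And>i. i \<in> F \<Longrightarrow> 0 \<le> \<alpha> i \<and> \<alpha> i \<le> m"
    and "0 \<le> m" "0 \<le> t" "t \<le> sum \<alpha> F"
  shows "\<exists>I\<subseteq>F. t \<le> sum \<alpha> I \<and> sum \<alpha> I \<le> t + m"
  using assms
proof (induction F rule: finite_induct)
  case empty
  then show ?case by auto
next
  case (insert x F)
  show ?case
  proof (cases "t \<le> sum \<alpha> F")
    case True
    then show ?thesis using insert by auto
  next
    case False
    have "\<alpha> x \<le> m"
      using insert.prems(1)[of x] by simp
    then have "sum \<alpha> (insert x F) \<le> t + m"
      using False insert.hyps by simp
    then show ?thesis
      using insert.prems by (intro exI[of _ "insert x F"]) auto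
  qed
qed

lemma exists_halves_card_le:
  assumes "finite L" "card L \<le> 2 * n"
  shows "\<exists>P Q. P \<union> Q = L \<and> P \<inter> Q = {} \<and> card P \<le> n \<and> card Q \<le> n"
proof -
  obtain P where P: "P \<subseteq> L" "card P = min n (card L)"
    using obtain_subset_with_card_n[of "min n (card L)" L] by auto
  have "card (L - P) = card L - card P"
    using assms(1) P(1) by (simp add: card_Diff_subset finite_subset)
  then have "card (L - P) \<le> n"
    using P(2) assms(2) by linarith
  then show ?thesis
    using P by (intro exI[of _ P] exI[of _ "L - P"]) auto
qed

lemma sum_le_if_card_le_2:
  fixes \<alpha> :: "'a \<Rightarrow> real"
  assumes "P \<subseteq> S" "card P \<le> 2" "0 \<le> b"
    and "\<And>i. i \<in> S \<Longrightarrow> \<alpha> i \<le> b"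
    and "\<And>i j. i \<in> S \<Longrightarrow> j \<in> S \<Longrightarrow> i \<noteq> j \<Longrightarrow> \<alpha> i + \<alpha> j \<le> b"
  shows "sum \<alpha> P \<le> b"
proof -
  consider "card P = 0" | "card P = 1" | "card P = 2"
    using assms(2) by linarith
  then show ?thesis
  proof cases
    case 1
    then show ?thesis
      using assms(3) by (cases "finite P") auto
  next
    case 2
    then obtain i where "P = {i}"
      by (auto simp: card_1_singleton_iff)
    then show ?thesis
      using assms(1,4) by simp
  next
    case 3
    then obtain i j where "P = {i, j}" "i \<noteq> j"
      by (auto simp: card_2_iff)
    then show ?thesis
      using assms(1,5) by simp
  qed
qed

lemma card_greater_le:
  fixes \<alpha> :: "'a \<Rightarrow> real"
  assumes "finite S" "\<And>i. i \<in> S \<Longrightarrow> 0 \<le> \<alpha> i" "sum \<alpha> S \<le> real (N + 1) * m"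
  shows "card {i\<in>S. m < \<alpha> i} \<le> N"
proof (rule ccontr)
  define L where "L = {i\<in>S. m < \<alpha> i}"
  assume "\<not> card L \<le> N"
  then have "L \<noteq> {}" and card_L: "real (N + 1) \<le> real (card L)"
    by auto
  have "0 \<le> sum \<alpha> S"
    using assms(2) by (simp add: sum_nonneg)
  have "0 \<le> m"
  proof (rule ccontr)
    assume "\<not> 0 \<le> m"
    then have "real (N + 1) * m < 0"
      by (intro mult_pos_neg) auto
    then show False
      using \<open>0 \<le> sum \<alpha> S\<close> assms(3) by linarith
  qed
  have "(\<Sum>i\<in>L. m) < sum \<alpha> L"
    using assms(1) \<open>L \<noteq> {}\<close> by (intro sum_strict_mono) (auto simp: L_def)
  moreover have "sum \<alpha> L \<le> sum \<alpha> S"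
    using assms(1,2) by (intro sum_mono2) (auto simp: L_def)
  moreover have "real (N + 1) * m \<le> real (card L) * m"
    using card_L \<open>0 \<le> m\<close> by (rule mult_right_mono)
  ultimately show False
    using assms(3) by simp
qed

lemma balanced_partition_if_few_large:
  fixes \<alpha> :: "'a \<Rightarrow> real" and S :: "'a set" and m :: real
  defines "L \<equiv> {i\<in>S. m < \<alpha> i}"
  assumes "finite S" "\<And>i. i \<in> S \<Longrightarrow> 0 \<le> \<alpha> i" "sum \<alpha> S \<le> real (2 * n + 1) * m"
    and "\<And>P. P \<subseteq> L \<Longrightarrow> card P \<le> n \<Longrightarrow> 2 * sum \<alpha> P \<le> sum \<alpha> S + m"
  shows "\<exists>J J'. J \<union> J' = S \<and> J \<inter> J' = {} \<and> \<bar>sum \<alpha> J - sum \<alpha> J'\<bar> \<le> m"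
proof -
  from assms(2,3,4) have "card L \<le> 2 * n"
    unfolding L_def by (rule card_greater_le)
  have "L \<subseteq> S"
    by (auto simp: L_def)
  then have "finite L" "finite (S - L)"
    using assms(2) finite_subset by auto
  obtain P Q where PQ: "P \<union> Q = L" "P \<inter> Q = {}" "card P \<le> n" "card Q \<le> n"
    using exists_halves_card_le[OF \<open>finite L\<close> \<open>card L \<le> 2 * n\<close>] by blast
  then have "P \<subseteq> L" "Q \<subseteq> L"
    by auto
  have small: "\<And>i. i \<in> S - L \<Longrightarrow> 0 \<le> \<alpha> i \<and> \<alpha> i \<le> m"
    using assms(3) by (auto simp: L_def)
  have "\<exists>A B. A \<union> B = S - L \<and> A \<inter> B = {} \<and>
      \<bar>(sum \<alpha> P - sum \<alpha> Q) + sum \<alpha> A - sum \<alpha> B\<bar>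
        \<le> max m (\<bar>sum \<alpha> P - sum \<alpha> Q\<bar> - sum \<alpha> (S - L))"
    using \<open>finite (S - L)\<close> small by (rule split_shifted_difference_le)
  then obtain A B where AB: "A \<union> B = S - L" "A \<inter> B = {}"
    and bound: "\<bar>(sum \<alpha> P - sum \<alpha> Q) + sum \<alpha> A - sum \<alpha> B\<bar>
                  \<le> max m (\<bar>sum \<alpha> P - sum \<alpha> Q\<bar> - sum \<alpha> (S - L))"
    by blast
  have fin: "finite P" "finite Q" "finite A" "finite B"
    using \<open>finite L\<close> \<open>finite (S - L)\<close> PQ(1) AB(1) by (metis finite_Un)+
  have "sum \<alpha> S = sum \<alpha> (S - L) + sum \<alpha> L"
    using \<open>L \<subseteq> S\<close> assms(2) by (rule sum.subset_diff)
  also have "sum \<alpha> L = sum \<alpha> P + sum \<alpha> Q"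
    unfolding PQ(1)[symmetric] using fin(1,2) PQ(2) by (rule sum.union_disjoint)
  finally have "\<bar>sum \<alpha> P - sum \<alpha> Q\<bar> - sum \<alpha> (S - L) \<le> m"
    using assms(5)[OF \<open>P \<subseteq> L\<close> PQ(3)] assms(5)[OF \<open>Q \<subseteq> L\<close> PQ(4)] by linarith
  then have "max m (\<bar>sum \<alpha> P - sum \<alpha> Q\<bar> - sum \<alpha> (S - L)) \<le> m"
    by simp
  moreover have "sum \<alpha> (P \<union> A) = sum \<alpha> P + sum \<alpha> A" "sum \<alpha> (Q \<union> B) = sum \<alpha> Q + sum \<alpha> B"
    using fin PQ(1) AB(1) by (auto intro: sum.union_disjoint)
  ultimately have "\<bar>sum \<alpha> (P \<union> A) - sum \<alpha> (Q \<union> B)\<bar> \<le> m"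
    using bound by linarith
  moreover have "(P \<union> A) \<union> (Q \<union> B) = S" "(P \<union> A) \<inter> (Q \<union> B) = {}"
    using PQ AB \<open>L \<subseteq> S\<close> by auto
  ultimately show ?thesis by blast
qed

lemma exists_subset_sum_between_1_4_and_1_2:
  fixes \<alpha> :: "'a \<Rightarrow> real"
  assumes "finite S" "\<And>i. i \<in> S \<Longrightarrow> 0 \<le> \<alpha> i" "sum \<alpha> S = 1"
    and single: "\<And>i. i \<in> S \<Longrightarrow> \<alpha> i \<le> 1/2"
  shows "\<exists>I\<subseteq>S. 1/4 \<le> sum \<alpha> I \<and> sum \<alpha> I \<le> 1/2"
proof (cases "\<exists>a\<in>S. 1/4 \<le> \<alpha> a")
  case True
  then obtain a where "a \<in> S" "1/4 \<le> \<alpha> a"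
    by blast
  then show ?thesis
    using single[of a] by (intro exI[of _ "{a}"]) auto
next
  case False
  then have "\<And>i. i \<in> S \<Longrightarrow> 0 \<le> \<alpha> i \<and> \<alpha> i \<le> 1/4"
    using assms(2) by force
  then have "\<exists>I\<subseteq>S. 1/4 \<le> sum \<alpha> I \<and> sum \<alpha> I \<le> 1/4 + 1/4"
    using assms(1,3) by (intro exists_subset_sum_between) simp_all
  then show ?thesis
    by (simp add: subset_eq)
qed

lemma exists_subset_sum_between_1_6_and_1_3:
  fixes \<alpha> :: "'a \<Rightarrow> real"
  assumes "finite S" "\<And>i. i \<in> S \<Longrightarrow> 0 \<le> \<alpha> i" "sum \<alpha> S = 1"
    and single: "\<And>i. i \<in> S \<Longrightarrow> \<alpha> i \<le> 5/12"
    and pair: "\<And>i j. i \<in> S \<Longrightarrow> j \<in> S \<Longrightarrow> i \<noteq> j \<Longrightarrow> \<alpha> i + \<alpha> j \<le> 5/12"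
  shows "\<exists>I\<subseteq>S. 1/6 \<le> sum \<alpha> I \<and> sum \<alpha> I \<le> 1/3"
proof -
  consider (large) a where "a \<in> S" "1/3 < \<alpha> a"
    | (medium) a where "a \<in> S" "1/6 \<le> \<alpha> a" "\<alpha> a \<le> 1/3"
    | (small) "\<And>i. i \<in> S \<Longrightarrow> 0 \<le> \<alpha> i \<and> \<alpha> i \<le> 1/6"
    using assms(2) by (meson not_le less_imp_le)
  then show ?thesis
  proof cases
    case large
    have "0 \<le> \<alpha> i \<and> \<alpha> i \<le> 1/6" if "i \<in> S - {a}" for i
      using pair[of i a] assms(2)[of i] large that by auto
    moreover have "1/6 \<le> sum \<alpha> (S - {a})"
      using large(1) assms(1,3) single[OF large(1)] by (simp add: sum_diff1)
    ultimately have "\<exists>I\<subseteq>S - {a}. 1/6 \<le> sum \<alpha> I \<and> sum \<alpha> I \<le> 1/6 + 1/6"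
      using assms(1) by (intro exists_subset_sum_between) simp_all
    then obtain I where "I \<subseteq> S - {a}" "1/6 \<le> sum \<alpha> I" "sum \<alpha> I \<le> 1/6 + 1/6"
      by blast
    then show ?thesis
      by (intro exI[of _ I]) auto
  next
    case medium
    then show ?thesis
      by (intro exI[of _ "{a}"]) auto
  next
    case small
    then have "\<exists>I\<subseteq>S. 1/6 \<le> sum \<alpha> I \<and> sum \<alpha> I \<le> 1/6 + 1/6"
      using assms(1,3) by (intro exists_subset_sum_between) simp_all
    then show ?thesis
      by (simp add: subset_eq)
  qed
qed

lemma ordered_pair_sum_ge_iff:
  fixes \<alpha> :: "nat \<Rightarrow> real"
  shows "(\<exists>i j. 1 \<le> i \<and> i < j \<and> j \<le> k \<and> x \<le> sum \<alpha> {i, j}) \<longleftrightarrow>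
         (\<exists>i\<in>{1..k}. \<exists>j\<in>{1..k}. i \<noteq> j \<and> x \<le> \<alpha> i + \<alpha> j)"
proof
  assume "\<exists>i j. 1 \<le> i \<and> i < j \<and> j \<le> k \<and> x \<le> sum \<alpha> {i, j}"
  then obtain i j where "1 \<le> i" "i < j" "j \<le> k" "x \<le> sum \<alpha> {i, j}"
    by blast
  then show "\<exists>i\<in>{1..k}. \<exists>j\<in>{1..k}. i \<noteq> j \<and> x \<le> \<alpha> i + \<alpha> j"
    by (intro bexI[of _ i] bexI[of _ j]) auto
next
  assume "\<exists>i\<in>{1..k}. \<exists>j\<in>{1..k}. i \<noteq> j \<and> x \<le> \<alpha> i + \<alpha> j"
  then obtain i j where ij: "i \<in> {1..k}" "j \<in> {1..k}" "i \<noteq> j" "x \<le> \<alpha> i + \<alpha> j"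
    by blast
  show "\<exists>i j. 1 \<le> i \<and> i < j \<and> j \<le> k \<and> x \<le> sum \<alpha> {i, j}"
  proof (cases "i < j")
    case True
    then show ?thesis
      using ij by (intro exI[of _ i] exI[of _ j]) auto
  next
    case False
    then show ?thesis
      using ij by (intro exI[of _ j] exI[of _ i]) (auto simp: insert_commute add.commute)
  qed
qed

lemma condI2maj_iff:
  "condI2maj k \<alpha> \<theta> \<longleftrightarrow> (\<exists>i\<in>{1..k}. \<exists>j\<in>{1..k}. i \<noteq> j \<and> 1 - \<theta> \<le> \<alpha> i + \<alpha> j)"
  unfolding condI2maj_def by (rule ordered_pair_sum_ge_iff)

lemma condI2_iff:
  "condI2 k \<alpha> \<theta> \<longleftrightarrow> (\<exists>i\<in>{1..k}. \<exists>j\<in>{1..k}. i \<noteq> j \<and> 3/2 * (1 - \<theta>) \<le> \<alpha> i + \<alpha> j)"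
  unfolding condI2_def by (rule ordered_pair_sum_ge_iff)

lemma condIImaj_intro:
  assumes "I \<subseteq> {1..k}" "J \<union> J' = {1..k} - I" "J \<inter> J' = {}"
    and "2*\<theta> - 1 \<le> sum \<alpha> I" "sum \<alpha> I \<le> 4*\<theta> - 2" "\<bar>sum \<alpha> J - sum \<alpha> J'\<bar> \<le> 2*\<theta> - 1"
  shows "condIImaj k \<alpha> \<theta>"
proof -
  have "I \<union> J \<union> J' = {1..k}" "I \<inter> J = {}" "I \<inter> J' = {}"
    using assms(1,2) by auto
  then show ?thesis
    unfolding condIImaj_def using assms(3-6) by blast
qed

lemma condIImaj_5_8_if_not_condI:
  fixes \<alpha> :: "nat \<Rightarrow> real"
  assumes nonneg: "\<And>i. i \<in> {1..k} \<Longrightarrow> 0 \<le> \<alpha> i" and sum1: "sum \<alpha> {1..k} = 1"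
    and "\<not> condI k \<alpha> (5/8)"
  shows "condIImaj k \<alpha> (5/8)"
proof -
  have single: "\<alpha> i \<le> 3/8" if "i \<in> {1..k}" for i
    using assms(3) that unfolding condI_def by force
  have "\<exists>I\<subseteq>{1..k}. 1/4 \<le> sum \<alpha> I \<and> sum \<alpha> I \<le> 1/2"
    using single by (intro exists_subset_sum_between_1_4_and_1_2[OF _ nonneg sum1]) force+
  then obtain I where I: "I \<subseteq> {1..k}" "1/4 \<le> sum \<alpha> I" "sum \<alpha> I \<le> 1/2"
    by blast
  define R where "R = {1..k} - I"
  have sum_R: "sum \<alpha> R = 1 - sum \<alpha> I"
    using I(1) sum1 by (simp add: R_def sum_diff)
  have "\<exists>J J'. J \<union> J' = R \<and> J \<inter> J' = {} \<and> \<bar>sum \<alpha> J - sum \<alpha> J'\<bar> \<le> 1/4"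
  proof (rule balanced_partition_if_few_large[where n = 1])
    show "finite R" "\<And>i. i \<in> R \<Longrightarrow> 0 \<le> \<alpha> i"
      using nonneg by (auto simp: R_def)
    show "sum \<alpha> R \<le> real (2 * 1 + 1) * (1/4)"
      using sum_R I(2) by simp
    show "2 * sum \<alpha> P \<le> sum \<alpha> R + 1/4" if "P \<subseteq> {i\<in>R. 1/4 < \<alpha> i}" "card P \<le> 1" for P
    proof -
      have "sum \<alpha> P \<le> real (card P) * (3/8)"
        using that(1) single by (intro sum_bounded_above) (auto simp: R_def)
      also have "\<dots> \<le> 3/8"
        using that(2) by simp
      finally show ?thesis
        using I(3) sum_R by linarith
    qed
  qed
  then obtain J J' where "J \<union> J' = R" "J \<inter> J' = {}" "\<bar>sum \<alpha> J - sum \<alpha> J'\<bar> \<le> 1/4"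
    by blast
  then show ?thesis
    using I by (intro condIImaj_intro[of I _ J J']) (auto simp: R_def)
qed

lemma condIImin_if_not_condI_condI2:
  fixes \<alpha> :: "nat \<Rightarrow> real"
  assumes nonneg: "\<And>i. i \<in> {1..k} \<Longrightarrow> 0 \<le> \<alpha> i" and sum1: "sum \<alpha> {1..k} = 1"
    and "3/5 \<le> \<theta>" "\<theta> \<le> 1" and "\<not> condI k \<alpha> \<theta>" "\<not> condI2 k \<alpha> \<theta>"
  shows "condIImin k \<alpha> \<theta>"
proof -
  have single: "\<alpha> i \<le> 3/2 * (1 - \<theta>)" if "i \<in> {1..k}" for i
    using assms(4,5) that unfolding condI_def by force
  have pair: "\<alpha> i + \<alpha> j \<le> 3/2 * (1 - \<theta>)" if "i \<in> {1..k}" "j \<in> {1..k}" "i \<noteq> j" for i j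
    using assms(6) that unfolding condI2_iff by force
  have "\<exists>J J'. J \<union> J' = {1..k} \<and> J \<inter> J' = {} \<and> \<bar>sum \<alpha> J - sum \<alpha> J'\<bar> \<le> 2*\<theta> - 1"
  proof (rule balanced_partition_if_few_large[where n = 2])
    show "finite {1..k}" "\<And>i. i \<in> {1..k} \<Longrightarrow> 0 \<le> \<alpha> i"
      using nonneg by auto
    show "sum \<alpha> {1..k} \<le> real (2 * 2 + 1) * (2*\<theta> - 1)"
      using sum1 assms(3) by simp
    show "2 * sum \<alpha> P \<le> sum \<alpha> {1..k} + (2*\<theta> - 1)"
      if "P \<subseteq> {i\<in>{1..k}. 2*\<theta> - 1 < \<alpha> i}" "card P \<le> 2" for P
    proof -
      have "P \<subseteq> {1..k}"
        using that(1) by blast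
      then have "sum \<alpha> P \<le> 3/2 * (1 - \<theta>)"
        by (rule sum_le_if_card_le_2[OF _ that(2) _ single pair]) (use assms(4) in simp)
      then show ?thesis
        using sum1 assms(3) by (simp add: algebra_simps)
    qed
  qed
  then show ?thesis
    unfolding condIImin_def .
qed

lemma condIImaj_7_12_if_not_condI_condI2maj:
  fixes \<alpha> :: "nat \<Rightarrow> real"
  assumes nonneg: "\<And>i. i \<in> {1..k} \<Longrightarrow> 0 \<le> \<alpha> i" and sum1: "sum \<alpha> {1..k} = 1"
    and "\<not> condI k \<alpha> (7/12)" "\<not> condI2maj k \<alpha> (7/12)"
  shows "condIImaj k \<alpha> (7/12)"
proof -
  have single: "\<alpha> i \<le> 5/12" if "i \<in> {1..k}" for i
    using assms(3) that unfolding condI_def by force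
  have pair: "\<alpha> i + \<alpha> j \<le> 5/12" if "i \<in> {1..k}" "j \<in> {1..k}" "i \<noteq> j" for i j
    using assms(4) that unfolding condI2maj_iff by force
  obtain I where I: "I \<subseteq> {1..k}" "1/6 \<le> sum \<alpha> I" "sum \<alpha> I \<le> 1/3"
    using exists_subset_sum_between_1_6_and_1_3[OF _ nonneg sum1 single pair] by auto
  define R where "R = {1..k} - I"
  have sum_R: "sum \<alpha> R = 1 - sum \<alpha> I"
    using I(1) sum1 by (simp add: R_def sum_diff)
  have "\<exists>J J'. J \<union> J' = R \<and> J \<inter> J' = {} \<and> \<bar>sum \<alpha> J - sum \<alpha> J'\<bar> \<le> 1/6"
  proof (rule balanced_partition_if_few_large[where n = 2])
    show "finite R" "\<And>i. i \<in> R \<Longrightarrow> 0 \<le> \<alpha> i"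
      using nonneg by (auto simp: R_def)
    show "sum \<alpha> R \<le> real (2 * 2 + 1) * (1/6)"
      using sum_R I(2) by simp
    show "2 * sum \<alpha> P \<le> sum \<alpha> R + 1/6" if "P \<subseteq> {i\<in>R. 1/6 < \<alpha> i}" "card P \<le> 2" for P
    proof -
      have "P \<subseteq> {1..k}"
        using that(1) by (auto simp: R_def)
      then have "sum \<alpha> P \<le> 5/12"
        by (rule sum_le_if_card_le_2[OF _ that(2) _ single pair]) simp
      then show ?thesis
        using I(3) sum_R by linarith
    qed
  qed
  then obtain J J' where "J \<union> J' = R" "J \<inter> J' = {}" "\<bar>sum \<alpha> J - sum \<alpha> J'\<bar> \<le> 1/6"
    by blast
  then show ?thesis
    using I by (intro condIImaj_intro[of I _ J J']) (auto simp: R_def)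
qed

lemma condIImaj_card_5_if_not_condI2maj:
  fixes \<alpha> :: "nat \<Rightarrow> real"
  assumes nonneg: "\<And>i. i \<in> {1..5} \<Longrightarrow> 0 \<le> \<alpha> i" and sum1: "sum \<alpha> {1..5} = 1"
    and "\<not> condI2maj 5 \<alpha> (11/20)"
  shows "condIImaj 5 \<alpha> (11/20)"
proof -
  have "\<forall>i\<in>{1..5}. \<forall>j\<in>{1..5}. i \<noteq> j \<longrightarrow> \<alpha> i + \<alpha> j < 1 - 11/20"
    using assms(3) unfolding condI2maj_iff by (meson not_le)
  then have pair: "\<alpha> i + \<alpha> j \<le> 9/20" if "i \<in> {1..5}" "j \<in> {1..5}" "i \<noteq> j" for i j
    using that by fastforce
  have single: "\<alpha> i \<le> 9/20" if "i \<in> {1..5}" for i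
  proof -
    obtain j where "j \<in> {1..5}" "j \<noteq> i"
      by (rule that[of "if i = 1 then 2 else 1"]) auto
    then show ?thesis
      using pair[OF that] nonneg by force
  qed
  \<comment> \<open>A weight below the average forms \<open>I\<close>; the other four split into two pairs.\<close>
  obtain a where a: "a \<in> {1..5}" "\<alpha> a \<le> 1/5"
  proof (rule ccontr)
    assume "\<not> thesis"
    then have "(\<Sum>i\<in>{1..5::nat}. 1/5) < sum \<alpha> {1..5}"
      using that by (intro sum_strict_mono) force+
    then show False
      using sum1 by simp
  qed
  define R where "R = {1..5} - {a}"
  have "card R \<le> 2 * 2"
    using a(1) by (simp add: R_def)
  then obtain J J' where JJ: "J \<union> J' = R" "J \<inter> J' = {}" "card J \<le> 2" "card J' \<le> 2"
    using exists_halves_card_le[of R 2] by (auto simp: R_def)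
  have pair_bound: "sum \<alpha> P \<le> 9/20" if "P \<subseteq> {1..5}" "card P \<le> 2" for P
    by (rule sum_le_if_card_le_2[OF that _ single pair]) simp
  have "J \<subseteq> {1..5}" "J' \<subseteq> {1..5}"
    using JJ(1) by (auto simp: R_def)
  then have halves: "sum \<alpha> J \<le> 9/20" "sum \<alpha> J' \<le> 9/20"
    using JJ(3,4) pair_bound by auto
  have total: "sum \<alpha> J + sum \<alpha> J' = 1 - \<alpha> a"
  proof -
    have "sum \<alpha> J + sum \<alpha> J' = sum \<alpha> R"
      using JJ(1,2) by (metis R_def finite_Diff finite_Un finite_atLeastAtMost sum.union_disjoint)
    also have "\<dots> = 1 - \<alpha> a"
      using sum1 a(1) by (simp add: R_def sum_diff1)
    finally show ?thesis .
  qed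
  have "1/10 \<le> \<alpha> a"
    using halves total by linarith
  moreover have "\<bar>sum \<alpha> J - sum \<alpha> J'\<bar> \<le> 1/10"
    unfolding abs_le_iff using halves total a(2) by (intro conjI) linarith+
  ultimately show ?thesis
    using a JJ(1,2) by (intro condIImaj_intro[of "{a}" _ J J']) (auto simp: R_def)
qed

lemma condI2maj_if_card_3_or_4:
  fixes \<alpha> :: "nat \<Rightarrow> real"
  assumes "k \<in> {3, 4}" "sum \<alpha> {1..k} = 1" "1/2 \<le> \<theta>"
  shows "condI2maj k \<alpha> \<theta>"
proof (rule ccontr)
  assume "\<not> condI2maj k \<alpha> \<theta>"
  then have pair: "\<alpha> i + \<alpha> j < 1 - \<theta>" if "i \<in> {1..k}" "j \<in> {1..k}" "i \<noteq> j" for i j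
    using that unfolding condI2maj_iff by (meson not_le)
  show False
  proof (cases "k = 3")
    case True
    then show False
      using assms(2,3) pair[of 1 2] pair[of 1 3] pair[of 2 3] by (simp add: eval_nat_numeral)
  next
    case False
    then have "k = 4"
      using assms(1) by simp
    then show False
      using assms(2,3) pair[of 1 2] pair[of 3 4] by (simp add: eval_nat_numeral)
  qed
qed

lemma condI2_if_card_3_or_2:
  fixes \<alpha> :: "nat \<Rightarrow> real"
  assumes "(k = 3 \<and> 5/9 \<le> \<theta>) \<or> (k = 2 \<and> 1/3 \<le> \<theta>)" "sum \<alpha> {1..k} = 1"
  shows "condI2 k \<alpha> \<theta>"
proof (rule ccontr)
  assume "\<not> condI2 k \<alpha> \<theta>"
  then have pair: "\<alpha> i + \<alpha> j < 3/2 * (1 - \<theta>)" if "i \<in> {1..k}" "j \<in> {1..k}" "i \<noteq> j" for i j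
    using that unfolding condI2_iff by (meson not_le)
  show False
  proof (cases "k = 3")
    case True
    then show False
      using assms pair[of 1 2] pair[of 1 3] pair[of 2 3] by (simp add: eval_nat_numeral)
  next
    case False
    then show False
      using assms pair[of 1 2] by (simp add: eval_nat_numeral)
  qed
qed

theorem lemma2p20:
  fixes k :: nat and \<alpha> :: "nat \<Rightarrow> real" and \<theta> :: real
  assumes nonneg: "\<And>i. i \<in> {1..k} \<Longrightarrow> \<alpha> i \<ge> 0"
    and sum1: "(\<Sum>i=1..k. \<alpha> i) = 1"
    and th: "1/3 \<le> \<theta>" "\<theta> \<le> 1"
  shows "(\<theta> = 5/8 \<longrightarrow> condI k \<alpha> \<theta> \<or> condIImaj k \<alpha> \<theta>)
       \<and> (\<theta> \<ge> 3/5 \<longrightarrow> condI k \<alpha> \<theta> \<or> condI2 k \<alpha> \<theta> \<or> condIImin k \<alpha> \<theta>)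
       \<and> (\<theta> = 7/12 \<longrightarrow> condI k \<alpha> \<theta> \<or> condI2maj k \<alpha> \<theta> \<or> condIImaj k \<alpha> \<theta>)
       \<and> (k = 5 \<and> \<theta> = 11/20 \<longrightarrow> condI2maj k \<alpha> \<theta> \<or> condIImaj k \<alpha> \<theta>)
       \<and> (k \<in> {3, 4} \<and> \<theta> \<ge> 1/2 \<longrightarrow> condI2maj k \<alpha> \<theta>)
       \<and> ((k = 3 \<and> \<theta> \<ge> 5/9) \<or> (k = 2 \<and> \<theta> \<ge> 1/3) \<longrightarrow> condI2 k \<alpha> \<theta>)"
proof (intro conjI impI)
  show "condI k \<alpha> \<theta> \<or> condIImaj k \<alpha> \<theta>" if "\<theta> = 5/8"
    using condIImaj_5_8_if_not_condI[OF nonneg sum1] that by blast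
  show "condI k \<alpha> \<theta> \<or> condI2 k \<alpha> \<theta> \<or> condIImin k \<alpha> \<theta>" if "\<theta> \<ge> 3/5"
    using condIImin_if_not_condI_condI2[OF nonneg sum1 that th(2)] by blast
  show "condI k \<alpha> \<theta> \<or> condI2maj k \<alpha> \<theta> \<or> condIImaj k \<alpha> \<theta>" if "\<theta> = 7/12"
    using condIImaj_7_12_if_not_condI_condI2maj[OF nonneg sum1] that by blast
  show "condI2maj k \<alpha> \<theta> \<or> condIImaj k \<alpha> \<theta>" if "k = 5 \<and> \<theta> = 11/20"
  proof -
    from that have k: "k = 5" and \<theta>: "\<theta> = 11/20"
      by auto
    show ?thesis
      using condIImaj_card_5_if_not_condI2maj[of \<alpha>] nonneg sum1 unfolding k \<theta> by blast
  qed
  show "condI2maj k \<alpha> \<theta>" if "k \<in> {3, 4} \<and> \<theta> \<ge> 1/2"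
    using condI2maj_if_card_3_or_4 sum1 that by auto
  show "condI2 k \<alpha> \<theta>" if "(k = 3 \<and> \<theta> \<ge> 5/9) \<or> (k = 2 \<and> \<theta> \<ge> 1/3)"
    using condI2_if_card_3_or_2[OF that] sum1 by auto
qed

end
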